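(* Let $\mathcal D$ be a geometric category in which every admissible morphism is a monomorphism, and let $f\colon\mathcal C\to\mathcal D$ be an admissibility fibration. Call a morphism of $\mathcal C$ admissible if it is $f$-cartesian and its image under $f$ is admissible. Then for every $c\in\mathcal C$, $f$ establishes a bijection from the poset of admissible subobjects of $c$ to the poset of admissible subobjects of $d=f(c)$ (sending the subobject represented by $r\colon c_1\to c$ to the one represented by $f(r)$).
   Context: An admissibility structure on a category is a subcategory containing all identities whose morphisms (called admissible) are closed under retracts, satisfy: if $g$ and $g\circ f$ are admissible then $f$ is, and whose base changes along arbitrary morphisms exist and are admissible; a geometric category is a category with an admissibility structure. A functor $f\colon\mathcal C\to\mathcal D$ to a geometric category is an admissibility fibration if for each $y\in\mathcal C$ and admissible $b\colon z\to f(y)$ there exists an $f$-cartesian $a\colon x\to y$ with $f(a)=b$. An admissible subobject of an object is a subobject represented by an admissible monomorphism into it, ordered by factorization. *)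

theory Defs
  imports Main
begin

record ('o,'m) cat =
  cObj  :: "'o set"
  cArr  :: "'m set"
  cDom  :: "'m \<Rightarrow> 'o"
  cCod  :: "'m \<Rightarrow> 'o"
  cId   :: "'o \<Rightarrow> 'm"
  cComp :: "'m \<Rightarrow> 'm \<Rightarrow> 'm"   (* cComp C g f = g \<circ> f, defined when cCod f = cDom g *)

definition hom :: "('o,'m) cat \<Rightarrow> 'o \<Rightarrow> 'o \<Rightarrow> 'm \<Rightarrow> bool" where
  "hom C x y f \<longleftrightarrow> f \<in> cArr C \<and> cDom C f = x \<and> cCod C f = y"

definition is_category :: "('o,'m) cat \<Rightarrow> bool" where
  "is_category C \<longleftrightarrow>
     (\<forall>f\<in>cArr C. cDom C f \<in> cObj C \<and> cCod C f \<in> cObj C) \<and>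
     (\<forall>x\<in>cObj C. hom C x x (cId C x)) \<and>
     (\<forall>f g. f \<in> cArr C \<and> g \<in> cArr C \<and> cCod C f = cDom C g \<longrightarrow>
        hom C (cDom C f) (cCod C g) (cComp C g f)) \<and>
     (\<forall>f\<in>cArr C. cComp C f (cId C (cDom C f)) = f \<and> cComp C (cId C (cCod C f)) f = f) \<and>
     (\<forall>f g h. f \<in> cArr C \<and> g \<in> cArr C \<and> h \<in> cArr C \<and> cCod C f = cDom C g \<and> cCod C g = cDom C h
        \<longrightarrow> cComp C h (cComp C g f) = cComp C (cComp C h g) f)"

definition mono :: "('o,'m) cat \<Rightarrow> 'm \<Rightarrow> bool" where
  "mono C m \<longleftrightarrow> m \<in> cArr C \<and>
     (\<forall>g h. g \<in> cArr C \<and> h \<in> cArr C \<and> cCod C g = cDom C m \<and> cCod C h = cDom C m \<and>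
        cDom C g = cDom C h \<and> cComp C m g = cComp C m h \<longrightarrow> g = h)"

text \<open>Pullback square: a' : x' \<rightarrow> y' is the base change of a : x \<rightarrow> y along g : y' \<rightarrow> y,
  with projection g' : x' \<rightarrow> x, so that a \<circ> g' = g \<circ> a'.\<close>
definition is_pullback :: "('o,'m) cat \<Rightarrow> 'm \<Rightarrow> 'm \<Rightarrow> 'm \<Rightarrow> 'm \<Rightarrow> bool" where
  "is_pullback C a g a' g' \<longleftrightarrow>
     a \<in> cArr C \<and> g \<in> cArr C \<and> cCod C g = cCod C a \<and>
     hom C (cDom C a') (cDom C g) a' \<and> hom C (cDom C a') (cDom C a) g' \<and>
     cComp C a g' = cComp C g a' \<and>
     (\<forall>u v. u \<in> cArr C \<and> v \<in> cArr C \<and> cDom C u = cDom C v \<and> cCod C u = cDom C a \<and>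
        cCod C v = cDom C g \<and> cComp C a u = cComp C g v \<longrightarrow>
        (\<exists>!t. hom C (cDom C u) (cDom C a') t \<and> cComp C g' t = u \<and> cComp C a' t = v))"

definition is_retract_of :: "('o,'m) cat \<Rightarrow> 'm \<Rightarrow> 'm \<Rightarrow> bool" where
  "is_retract_of C f g \<longleftrightarrow> f \<in> cArr C \<and> g \<in> cArr C \<and>
     (\<exists>i r j s. hom C (cDom C f) (cDom C g) i \<and> hom C (cDom C g) (cDom C f) r \<and>
        hom C (cCod C f) (cCod C g) j \<and> hom C (cCod C g) (cCod C f) s \<and>
        cComp C r i = cId C (cDom C f) \<and> cComp C s j = cId C (cCod C f) \<and>
        cComp C g i = cComp C j f \<and> cComp C f r = cComp C s g)"

definition admissibility_structure :: "('o,'m) cat \<Rightarrow> 'm set \<Rightarrow> bool" where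
  "admissibility_structure C A \<longleftrightarrow>
     A \<subseteq> cArr C \<and>
     (\<forall>x\<in>cObj C. cId C x \<in> A) \<and>
     (\<forall>f g. f \<in> A \<and> g \<in> A \<and> cCod C f = cDom C g \<longrightarrow> cComp C g f \<in> A) \<and>
     (\<forall>f g. is_retract_of C f g \<and> g \<in> A \<longrightarrow> f \<in> A) \<and>
     (\<forall>f g. f \<in> cArr C \<and> g \<in> A \<and> cCod C f = cDom C g \<and> cComp C g f \<in> A \<longrightarrow> f \<in> A) \<and>
     (\<forall>a\<in>A. \<forall>g\<in>cArr C. cCod C g = cCod C a \<longrightarrow>
        (\<exists>a' g'. is_pullback C a g a' g') \<and> (\<forall>a' g'. is_pullback C a g a' g' \<longrightarrow> a' \<in> A))"

definition is_functor :: "('o,'m) cat \<Rightarrow> ('p,'n) cat \<Rightarrow> ('o \<Rightarrow> 'p) \<Rightarrow> ('m \<Rightarrow> 'n) \<Rightarrow> bool" where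
  "is_functor C D Fo Fm \<longleftrightarrow>
     (\<forall>x\<in>cObj C. Fo x \<in> cObj D) \<and>
     (\<forall>f\<in>cArr C. hom D (Fo (cDom C f)) (Fo (cCod C f)) (Fm f)) \<and>
     (\<forall>x\<in>cObj C. Fm (cId C x) = cId D (Fo x)) \<and>
     (\<forall>f g. f \<in> cArr C \<and> g \<in> cArr C \<and> cCod C f = cDom C g \<longrightarrow>
        Fm (cComp C g f) = cComp D (Fm g) (Fm f))"

definition cartesian :: "('o,'m) cat \<Rightarrow> ('p,'n) cat \<Rightarrow> ('o \<Rightarrow> 'p) \<Rightarrow> ('m \<Rightarrow> 'n) \<Rightarrow> 'm \<Rightarrow> bool" where
  "cartesian C D Fo Fm a \<longleftrightarrow> a \<in> cArr C \<and>
     (\<forall>a' h. a' \<in> cArr C \<and> cCod C a' = cCod C a \<and>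
        hom D (Fo (cDom C a')) (Fo (cDom C a)) h \<and> cComp D (Fm a) h = Fm a' \<longrightarrow>
        (\<exists>!k. hom C (cDom C a') (cDom C a) k \<and> cComp C a k = a' \<and> Fm k = h))"

definition admissibility_fibration ::
  "('o,'m) cat \<Rightarrow> ('p,'n) cat \<Rightarrow> 'n set \<Rightarrow> ('o \<Rightarrow> 'p) \<Rightarrow> ('m \<Rightarrow> 'n) \<Rightarrow> bool" where
  "admissibility_fibration C D AD Fo Fm \<longleftrightarrow> is_functor C D Fo Fm \<and>
     (\<forall>y\<in>cObj C. \<forall>b\<in>AD. cCod D b = Fo y \<longrightarrow>
        (\<exists>a. cartesian C D Fo Fm a \<and> cCod C a = y \<and> Fm a = b))"

definition induced_admissible :: "('o,'m) cat \<Rightarrow> ('p,'n) cat \<Rightarrow> 'n set \<Rightarrow> ('o \<Rightarrow> 'p) \<Rightarrow> ('m \<Rightarrow> 'n) \<Rightarrow> 'm set" where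
  "induced_admissible C D AD Fo Fm = {a. cartesian C D Fo Fm a \<and> Fm a \<in> AD}"

definition adm_monos :: "('o,'m) cat \<Rightarrow> 'm set \<Rightarrow> 'o \<Rightarrow> 'm set" where
  "adm_monos C A c = {r. r \<in> A \<and> mono C r \<and> cCod C r = c}"

definition factors_through :: "('o,'m) cat \<Rightarrow> 'm \<Rightarrow> 'm \<Rightarrow> bool" where
  "factors_through C r r' \<longleftrightarrow> (\<exists>k. hom C (cDom C r) (cDom C r') k \<and> cComp C r' k = r)"

text \<open>The subobject represented by r: its class of admissible monos with the same codomain.\<close>
definition subobj_class :: "('o,'m) cat \<Rightarrow> 'm set \<Rightarrow> 'o \<Rightarrow> 'm \<Rightarrow> 'm set" where
  "subobj_class C A c r =
     {r' \<in> adm_monos C A c. factors_through C r r' \<and> factors_through C r' r}"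

definition adm_subobjects :: "('o,'m) cat \<Rightarrow> 'm set \<Rightarrow> 'o \<Rightarrow> 'm set set" where
  "adm_subobjects C A c = subobj_class C A c ` adm_monos C A c"

end

theory Submission
  imports Defs
begin

(* Factorization through a fixed mono is a preorder, and the subobjects are its equivalence
   classes. The functor f preserves factorizations, and since every admissible mono of C over c
   is cartesian, it also reflects them; so it induces an injection on admissible subobjects.
   Surjectivity comes from lifting an admissible mono b into f(c) to a cartesian arrow over b,
   which is again a mono because cartesian arrows are left-cancellable modulo f. *)

lemma hom_comp:
  assumes "is_category C" "f \<in> cArr C" "g \<in> cArr C" "cCod C f = cDom C g"
  shows "hom C (cDom C f) (cCod C g) (cComp C g f)"
  using assms unfolding is_category_def by blast

lemma comp_assoc:
  assumes "is_category C" "f \<in> cArr C" "g \<in> cArr C" "h \<in> cArr C"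
    "cCod C f = cDom C g" "cCod C g = cDom C h"
  shows "cComp C h (cComp C g f) = cComp C (cComp C h g) f"
  using assms unfolding is_category_def by blast

lemma factors_through_refl:
  assumes "is_category C" "r \<in> cArr C"
  shows "factors_through C r r"
proof -
  have "cDom C r \<in> cObj C" using assms unfolding is_category_def by blast
  then have "hom C (cDom C r) (cDom C r) (cId C (cDom C r))"
    using assms unfolding is_category_def by blast
  moreover have "cComp C r (cId C (cDom C r)) = r" using assms unfolding is_category_def by blast
  ultimately show ?thesis unfolding factors_through_def by blast
qed

lemma factors_through_trans:
  assumes "is_category C" "r'' \<in> cArr C"
    and "factors_through C r r'" "factors_through C r' r''"
  shows "factors_through C r r''"
proof -
  obtain k where k: "hom C (cDom C r) (cDom C r') k" "cComp C r' k = r"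
    using assms(3) unfolding factors_through_def by blast
  obtain k' where k': "hom C (cDom C r') (cDom C r'') k'" "cComp C r'' k' = r'"
    using assms(4) unfolding factors_through_def by blast
  have "hom C (cDom C r) (cDom C r'') (cComp C k' k)"
    using hom_comp[OF assms(1)] k(1) k'(1) unfolding hom_def by fastforce
  moreover have "cComp C r'' (cComp C k' k) = r"
    using comp_assoc[OF assms(1) _ _ assms(2)] k k' unfolding hom_def by fastforce
  ultimately show ?thesis unfolding factors_through_def by blast
qed

lemma monoD:
  assumes "mono C m" "hom C x (cDom C m) g" "hom C x (cDom C m) h" "cComp C m g = cComp C m h"
  shows "g = h"
  using assms unfolding mono_def hom_def by auto

lemma adm_monosD:
  assumes "r \<in> adm_monos C A c"
  shows "r \<in> cArr C" "r \<in> A" "cCod C r = c"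
  using assms unfolding adm_monos_def mono_def by auto

lemma subobj_class_self:
  assumes "is_category C" "r \<in> adm_monos C A c"
  shows "r \<in> subobj_class C A c r"
  using assms(2) factors_through_refl[OF assms(1) adm_monosD(1)[OF assms(2)]]
  unfolding subobj_class_def by blast

lemma subobj_class_eq_iff:
  assumes "is_category C" "r \<in> adm_monos C A c" "r' \<in> adm_monos C A c"
  shows "subobj_class C A c r = subobj_class C A c r' \<longleftrightarrow>
    factors_through C r r' \<and> factors_through C r' r"
proof
  assume "subobj_class C A c r = subobj_class C A c r'"
  then show "factors_through C r r' \<and> factors_through C r' r"
    using subobj_class_self[OF assms(1,2)] unfolding subobj_class_def by auto
next
  assume "factors_through C r r' \<and> factors_through C r' r"
  then have "factors_through C x r \<and> factors_through C r x \<longleftrightarrow>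
      factors_through C x r' \<and> factors_through C r' x" if "x \<in> cArr C" for x
    using factors_through_trans[OF assms(1)] that adm_monosD(1)[OF assms(2)]
      adm_monosD(1)[OF assms(3)] by metis
  then show "subobj_class C A c r = subobj_class C A c r'"
    unfolding subobj_class_def by (auto dest: adm_monosD(1))
qed

lemma some_in_subobj_class:
  assumes "is_category C" "r \<in> adm_monos C A c"
  shows "(SOME x. x \<in> subobj_class C A c r) \<in> subobj_class C A c r"
  using subobj_class_self[OF assms] by (rule someI)

lemma bij_betw_adm_subobjects:
  assumes C: "is_category C" and D: "is_category D"
    and into: "\<And>r. r \<in> adm_monos C A c \<Longrightarrow> G r \<in> adm_monos D B d"
    and factors_iff: "\<And>r r'. r \<in> adm_monos C A c \<Longrightarrow> r' \<in> adm_monos C A c \<Longrightarrow>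
      factors_through D (G r) (G r') \<longleftrightarrow> factors_through C r r'"
    and onto: "\<And>b. b \<in> adm_monos D B d \<Longrightarrow> \<exists>r\<in>adm_monos C A c. G r = b"
  shows "bij_betw (\<lambda>S. subobj_class D B d (G (SOME r. r \<in> S)))
    (adm_subobjects C A c) (adm_subobjects D B d)"
proof -
  let ?\<Phi> = "\<lambda>S. subobj_class D B d (G (SOME r. r \<in> S))"
  have classes_eq_iff: "subobj_class D B d (G r) = subobj_class D B d (G r') \<longleftrightarrow>
      subobj_class C A c r = subobj_class C A c r'"
    if "r \<in> adm_monos C A c" "r' \<in> adm_monos C A c" for r r'
    using that subobj_class_eq_iff[OF C] subobj_class_eq_iff[OF D] into factors_iff by simp
  have \<Phi>_class: "?\<Phi> (subobj_class C A c r) = subobj_class D B d (G r)"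
    if r: "r \<in> adm_monos C A c" for r
  proof -
    define s where "s = (SOME x. x \<in> subobj_class C A c r)"
    have "s \<in> adm_monos C A c" "factors_through C r s" "factors_through C s r"
      using some_in_subobj_class[OF C r] unfolding s_def subobj_class_def by auto
    then show ?thesis using classes_eq_iff[OF _ r] subobj_class_eq_iff[OF C _ r] s_def by simp
  qed
  have "inj_on ?\<Phi> (adm_subobjects C A c)"
    by (rule inj_onI) (auto simp: adm_subobjects_def \<Phi>_class classes_eq_iff)
  moreover have "?\<Phi> ` adm_subobjects C A c = adm_subobjects D B d"
    using into onto unfolding adm_subobjects_def by (force simp: \<Phi>_class image_comp)
  ultimately show ?thesis unfolding bij_betw_def by blast
qed

lemma functor_hom:
  assumes "is_functor C D Fo Fm" "f \<in> cArr C"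
  shows "hom D (Fo (cDom C f)) (Fo (cCod C f)) (Fm f)"
  using assms unfolding is_functor_def by blast

lemma functor_comp:
  assumes "is_functor C D Fo Fm" "f \<in> cArr C" "g \<in> cArr C" "cCod C f = cDom C g"
  shows "Fm (cComp C g f) = cComp D (Fm g) (Fm f)"
  using assms unfolding is_functor_def by blast

lemma functor_factors_through:
  assumes F: "is_functor C D Fo Fm" and "r \<in> cArr C" "r' \<in> cArr C" "factors_through C r r'"
  shows "factors_through D (Fm r) (Fm r')"
proof -
  obtain k where k: "hom C (cDom C r) (cDom C r') k" "cComp C r' k = r"
    using assms(4) unfolding factors_through_def by blast
  then have "Fm r = cComp D (Fm r') (Fm k)"
    using functor_comp[OF F] assms(3) unfolding hom_def by blast
  moreover have "hom D (cDom D (Fm r)) (cDom D (Fm r')) (Fm k)"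
    using functor_hom[OF F] k assms(2,3) unfolding hom_def by auto
  ultimately show ?thesis unfolding factors_through_def by auto
qed

lemma cartesianD:
  assumes "cartesian C D Fo Fm a" "a' \<in> cArr C" "cCod C a' = cCod C a"
    "hom D (Fo (cDom C a')) (Fo (cDom C a)) h" "cComp D (Fm a) h = Fm a'"
  shows "\<exists>!k. hom C (cDom C a') (cDom C a) k \<and> cComp C a k = a' \<and> Fm k = h"
  using assms unfolding cartesian_def by blast

lemma cartesian_reflects_factors_through:
  assumes F: "is_functor C D Fo Fm" and a: "cartesian C D Fo Fm a"
    and "r \<in> cArr C" "cCod C r = cCod C a" "factors_through D (Fm r) (Fm a)"
  shows "factors_through C r a"
proof -
  have "a \<in> cArr C" using a unfolding cartesian_def by blast
  then have "cDom D (Fm r) = Fo (cDom C r)" "cDom D (Fm a) = Fo (cDom C a)"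
    using functor_hom[OF F] assms(3) unfolding hom_def by auto
  then obtain h where "hom D (Fo (cDom C r)) (Fo (cDom C a)) h" "cComp D (Fm a) h = Fm r"
    using assms(5) unfolding factors_through_def by auto
  then show ?thesis
    using cartesianD[OF a assms(3,4)] unfolding factors_through_def by blast
qed

lemma cartesian_cancel:
  assumes C: "is_category C" and F: "is_functor C D Fo Fm" and a: "cartesian C D Fo Fm a"
    and k1: "hom C x (cDom C a) k1" and k2: "hom C x (cDom C a) k2"
    and eq: "cComp C a k1 = cComp C a k2" "Fm k1 = Fm k2"
  shows "k1 = k2"
proof -
  have "a \<in> cArr C" using a unfolding cartesian_def by blast
  then have ak1: "cComp C a k1 \<in> cArr C" "cDom C (cComp C a k1) = x"
      "cCod C (cComp C a k1) = cCod C a"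
    using hom_comp[OF C, of k1 a] k1 unfolding hom_def by auto
  have "hom D (Fo x) (Fo (cDom C a)) (Fm k1)"
    using functor_hom[OF F] k1 unfolding hom_def by fastforce
  moreover have "cComp D (Fm a) (Fm k1) = Fm (cComp C a k1)"
    using functor_comp[OF F] k1 \<open>a \<in> cArr C\<close> unfolding hom_def by auto
  ultimately have "\<exists>!k. hom C x (cDom C a) k \<and> cComp C a k = cComp C a k1 \<and> Fm k = Fm k1"
    using cartesianD[OF a ak1(1,3)] ak1(2) by simp
  moreover have "hom C x (cDom C a) k2 \<and> cComp C a k2 = cComp C a k1 \<and> Fm k2 = Fm k1"
    using k2 eq by simp
  ultimately show ?thesis using k1 by blast
qed

lemma cartesian_mono:
  assumes C: "is_category C" and F: "is_functor C D Fo Fm" and a: "cartesian C D Fo Fm a"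
    and mono_Fa: "mono D (Fm a)"
  shows "mono C a"
  unfolding mono_def
proof (intro conjI allI impI)
  show a_arr: "a \<in> cArr C" using a unfolding cartesian_def by blast
  fix g h
  assume "g \<in> cArr C \<and> h \<in> cArr C \<and> cCod C g = cDom C a \<and> cCod C h = cDom C a \<and>
    cDom C g = cDom C h \<and> cComp C a g = cComp C a h"
  then have g: "hom C (cDom C g) (cDom C a) g" and h: "hom C (cDom C g) (cDom C a) h"
    and eq: "cComp C a g = cComp C a h"
    unfolding hom_def by auto
  have Fg: "hom D (Fo (cDom C g)) (cDom D (Fm a)) (Fm g)"
    and Fh: "hom D (Fo (cDom C g)) (cDom D (Fm a)) (Fm h)"
    using functor_hom[OF F] g h a_arr unfolding hom_def by auto
  have "cComp D (Fm a) (Fm g) = cComp D (Fm a) (Fm h)"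
    using functor_comp[OF F _ a_arr, of g] functor_comp[OF F _ a_arr, of h] g h eq
    unfolding hom_def by simp
  with Fg Fh have "Fm g = Fm h" by (rule monoD[OF mono_Fa])
  then show "g = h" using cartesian_cancel[OF C F a g h eq] by blast
qed

lemma induced_adm_monos_image:
  assumes F: "is_functor C D Fo Fm" and AD_mono: "\<forall>m\<in>AD. mono D m"
    and r: "r \<in> adm_monos C (induced_admissible C D AD Fo Fm) c"
  shows "Fm r \<in> adm_monos D AD (Fo c)"
  using adm_monosD[OF r] functor_hom[OF F] AD_mono
  unfolding adm_monos_def induced_admissible_def hom_def by auto

lemma induced_adm_monos_lift:
  assumes C: "is_category C" and AD_mono: "\<forall>m\<in>AD. mono D m"
    and fib: "admissibility_fibration C D AD Fo Fm" and "c \<in> cObj C"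
    and b: "b \<in> adm_monos D AD (Fo c)"
  shows "\<exists>a\<in>adm_monos C (induced_admissible C D AD Fo Fm) c. Fm a = b"
proof -
  have F: "is_functor C D Fo Fm" using fib unfolding admissibility_fibration_def by blast
  obtain a where a: "cartesian C D Fo Fm a" "cCod C a = c" "Fm a = b"
    using fib \<open>c \<in> cObj C\<close> adm_monosD[OF b] unfolding admissibility_fibration_def by blast
  moreover have "mono C a"
    using cartesian_mono[OF C F a(1)] a(3) adm_monosD(2)[OF b] AD_mono by simp
  ultimately show ?thesis
    using adm_monosD(2)[OF b] unfolding adm_monos_def induced_admissible_def by auto
qed

theorem proposition4p1p11:
  fixes C :: "('o,'m) cat" and D :: "('p,'n) cat"
    and AD :: "'n set" and Fo :: "'o \<Rightarrow> 'p" and Fm :: "'m \<Rightarrow> 'n" and c :: 'o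
  assumes "is_category C" and "is_category D"
    and "admissibility_structure D AD"
    and "\<forall>m\<in>AD. mono D m"
    and "admissibility_fibration C D AD Fo Fm"
    and "c \<in> cObj C"
  defines "AC \<equiv> induced_admissible C D AD Fo Fm"
  shows "(\<forall>r\<in>adm_monos C AC c. Fm r \<in> adm_monos D AD (Fo c)) \<and>
         (\<forall>r\<in>adm_monos C AC c. \<forall>r'\<in>adm_monos C AC c.
            subobj_class C AC c r = subobj_class C AC c r' \<longrightarrow>
            subobj_class D AD (Fo c) (Fm r) = subobj_class D AD (Fo c) (Fm r')) \<and>
         bij_betw (\<lambda>S. subobj_class D AD (Fo c) (Fm (SOME r. r \<in> S)))
           (adm_subobjects C AC c) (adm_subobjects D AD (Fo c))"
proof -
  have F: "is_functor C D Fo Fm" using assms(5) unfolding admissibility_fibration_def by blast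
  have into: "\<And>r. r \<in> adm_monos C AC c \<Longrightarrow> Fm r \<in> adm_monos D AD (Fo c)"
    using induced_adm_monos_image[OF F assms(4)] unfolding AC_def .
  have factors_iff: "factors_through D (Fm r) (Fm r') \<longleftrightarrow> factors_through C r r'"
    if "r \<in> adm_monos C AC c" "r' \<in> adm_monos C AC c" for r r'
    using that functor_factors_through[OF F] cartesian_reflects_factors_through[OF F]
      adm_monosD[OF that(1)] adm_monosD[OF that(2)]
    unfolding AC_def induced_admissible_def by auto
  have onto: "\<And>b. b \<in> adm_monos D AD (Fo c) \<Longrightarrow> \<exists>r\<in>adm_monos C AC c. Fm r = b"
    using induced_adm_monos_lift[OF assms(1,4,5,6)] unfolding AC_def .
  have "subobj_class D AD (Fo c) (Fm r) = subobj_class D AD (Fo c) (Fm r')"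
    if "r \<in> adm_monos C AC c" "r' \<in> adm_monos C AC c"
      "subobj_class C AC c r = subobj_class C AC c r'" for r r'
    using that subobj_class_eq_iff[OF assms(1)] subobj_class_eq_iff[OF assms(2)] into factors_iff
    by simp
  then show ?thesis
    using into bij_betw_adm_subobjects[OF assms(1,2) into factors_iff onto] by blast
qed

end
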